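(* Consider the forward SDE $\mathrm{d}\mathbf{x}_t=\alpha(t)\mathbf{x}_t\,\mathrm{d}t+g(t)\,\mathrm{d}\mathbf{w}_t$, $\mathbf{x}_0\sim p_{\mathrm{data}}$, of Variance Preserving or Variance Exploding type, with associated noise density $p_{\mathrm{noise}}$, marginal density $p(\mathbf{x},t)$ and conditional density $p(\mathbf{x},t\mid\mathbf{x}_0)$. For a parametric family $\{\mathbf{s}_{\boldsymbol\theta}\}$ define $$I(\mathbf{s},T)=\frac12\int_0^T g^2(t)\,\mathbb{E}\big[\|\mathbf{s}(\mathbf{x}_t,t)-\nabla\log p(\mathbf{x}_t,t\mid\mathbf{x}_0)\|^2\big]\mathrm{d}t,\quad K(T)=I(\nabla\log p,T),\quad\mathcal{G}(\mathbf{s},T)=I(\mathbf{s},T)-K(T),$$ and let $\widehat{\mathbf{s}}_{\boldsymbol\theta}$ denote, for each $T$, the optimal score (parameters minimizing $I(\mathbf{s}_{\boldsymbol\theta},T)$). Let $\{\nu_{\boldsymbol\phi}\}$ be a parametric family of densities containing $p_{\mathrm{noise}}$, and for each $T$ let $\boldsymbol\phi^\star=\boldsymbol\phi^\star(T)$ minimize $\mathrm{KL}(p(\mathbf{x},T)\,\|\,\nu_{\boldsymbol\phi})$. Define $$\mathcal{L}_{\mathrm{ELBO}}(\mathbf{s},T)=\mathbb{E}_{p_{\mathrm{data}}}[\log p_{\mathrm{data}}]-\mathcal{G}(\mathbf{s},T)-\mathrm{KL}\big(p(\mathbf{x},T)\,\|\,p_{\mathrm{noise}}\big),$$ $$\mathcal{L}^{\boldsymbol\phi}_{\mathrm{ELBO}}(\mathbf{s},T)=\mathbb{E}_{p_{\mathrm{data}}}[\log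 p_{\mathrm{data}}]-\mathcal{G}(\mathbf{s},T)-\mathrm{KL}\big(p(\mathbf{x},T)\,\|\,\nu_{\boldsymbol\phi}\big).$$ Let $T^\star$ be a diffusion time maximizing $T\mapsto\mathcal{L}_{\mathrm{ELBO}}(\widehat{\mathbf{s}}_{\boldsymbol\theta},T)$. Then there exists at least one diffusion time $\tau\in[0,T^\star]$ such that $\mathcal{L}^{\boldsymbol\phi^\star}_{\mathrm{ELBO}}(\widehat{\mathbf{s}}_{\boldsymbol\theta},\tau)\ge\mathcal{L}_{\mathrm{ELBO}}(\widehat{\mathbf{s}}_{\boldsymbol\theta},T^\star)$.
   Context: Variance Preserving: $\alpha=-\tfrac12\beta$, $g=\sqrt\beta$, $\beta(t)=\beta_0+(\beta_1-\beta_0)t$, $p_{\mathrm{noise}}=\mathcal{N}(\mathbf{0},\mathbf{I})$. Variance Exploding: $\alpha=0$, $g=\sqrt{\mathrm{d}\sigma^2/\mathrm{d}t}$, $\sigma^2(t)=(\sigma_{\max}^2/\sigma_{\min}^2)^t$, $p_{\mathrm{noise}}=\mathcal{N}(\mathbf{0},(\sigma^2(T)-\sigma^2(0))\mathbf{I})$. Expectations are over $\mathbf{x}_0\sim p_{\mathrm{data}}$ and the forward process; minimizers are assumed to exist. *)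

theory Defs
  imports "HOL-Analysis.Analysis"
begin

text \<open>Forward SDE types: VP with parameters beta0 beta1, VE with parameters sigma_min sigma_max.\<close>
datatype sde = VP real real | VE real real

definition valid_sde :: "sde \<Rightarrow> bool" where
  "valid_sde s = (case s of VP b0 b1 \<Rightarrow> 0 < b0 \<and> b0 \<le> b1
                          | VE smin smax \<Rightarrow> 0 < smin \<and> smin < smax)"

definition beta :: "real \<Rightarrow> real \<Rightarrow> real \<Rightarrow> real" where
  "beta b0 b1 t = b0 + (b1 - b0) * t"

definition sigma2 :: "real \<Rightarrow> real \<Rightarrow> real \<Rightarrow> real" where
  "sigma2 smin smax t = (smax\<^sup>2 / smin\<^sup>2) powr t"

definition alpha :: "sde \<Rightarrow> real \<Rightarrow> real" where
  "alpha s t = (case s of VP b0 b1 \<Rightarrow> - (1/2) * beta b0 b1 t | VE smin smax \<Rightarrow> 0)"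

definition gdiff :: "sde \<Rightarrow> real \<Rightarrow> real" where
  "gdiff s t = (case s of VP b0 b1 \<Rightarrow> sqrt (beta b0 b1 t)
                        | VE smin smax \<Rightarrow> sqrt (deriv (sigma2 smin smax) t))"

text \<open>Transition kernel of the linear SDE dx = alpha x dt + g dw:
  x_t | x_0 ~ N(m(t) x_0, v(t) I) with m(t) = exp(int_0^t alpha),
  v(t) = int_0^t exp(2 int_s^t alpha) g(s)^2 ds.\<close>
definition mean_coef :: "sde \<Rightarrow> real \<Rightarrow> real" where
  "mean_coef s t = exp (LBINT u=0..t. alpha s u)"

definition var_coef :: "sde \<Rightarrow> real \<Rightarrow> real" where
  "var_coef s t = (LBINT r=0..t. exp (2 * (LBINT u=r..t. alpha s u)) * (gdiff s r)\<^sup>2)"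

definition gauss :: "'a::euclidean_space \<Rightarrow> real \<Rightarrow> 'a \<Rightarrow> real" where
  "gauss mu v x = (2 * pi * v) powr (- real DIM('a) / 2) * exp (- (norm (x - mu))\<^sup>2 / (2 * v))"

definition cond_dens :: "sde \<Rightarrow> real \<Rightarrow> 'a::euclidean_space \<Rightarrow> 'a \<Rightarrow> real" where
  "cond_dens s t x0 x = gauss (mean_coef s t *\<^sub>R x0) (var_coef s t) x"

definition marg_dens :: "sde \<Rightarrow> ('a::euclidean_space \<Rightarrow> real) \<Rightarrow> real \<Rightarrow> 'a \<Rightarrow> real" where
  "marg_dens s pdata t x = (\<integral>x0. cond_dens s t x0 x * pdata x0 \<partial>lborel)"

definition p_noise :: "sde \<Rightarrow> real \<Rightarrow> 'a::euclidean_space \<Rightarrow> real" where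
  "p_noise s T x = (case s of VP b0 b1 \<Rightarrow> gauss 0 1 x
       | VE smin smax \<Rightarrow> gauss 0 (sigma2 smin smax T - sigma2 smin smax 0) x)"

definition grad_log :: "('a::euclidean_space \<Rightarrow> real) \<Rightarrow> 'a \<Rightarrow> 'a" where
  "grad_log f x = (SOME D. GDERIV (\<lambda>y. ln (f y)) x :> D)"

definition I_loss :: "sde \<Rightarrow> ('a::euclidean_space \<Rightarrow> real) \<Rightarrow> ('a \<Rightarrow> real \<Rightarrow> 'a) \<Rightarrow> real \<Rightarrow> real" where
  "I_loss s pdata sc T = 1/2 * (LINT t:{0..T}|lborel. (gdiff s t)\<^sup>2 *
      (\<integral>x0. pdata x0 * (\<integral>x. cond_dens s t x0 x *
          (norm (sc x t - grad_log (cond_dens s t x0) x))\<^sup>2 \<partial>lborel) \<partial>lborel))"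

definition true_score :: "sde \<Rightarrow> ('a::euclidean_space \<Rightarrow> real) \<Rightarrow> 'a \<Rightarrow> real \<Rightarrow> 'a" where
  "true_score s pdata x t = grad_log (marg_dens s pdata t) x"

definition K_loss :: "sde \<Rightarrow> ('a::euclidean_space \<Rightarrow> real) \<Rightarrow> real \<Rightarrow> real" where
  "K_loss s pdata T = I_loss s pdata (true_score s pdata) T"

definition G_gap :: "sde \<Rightarrow> ('a::euclidean_space \<Rightarrow> real) \<Rightarrow> ('a \<Rightarrow> real \<Rightarrow> 'a) \<Rightarrow> real \<Rightarrow> real" where
  "G_gap s pdata sc T = I_loss s pdata sc T - K_loss s pdata T"

definition KL :: "('a::euclidean_space \<Rightarrow> real) \<Rightarrow> ('a \<Rightarrow> real) \<Rightarrow> real" where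
  "KL p q = (\<integral>x. p x * ln (p x / q x) \<partial>lborel)"

definition neg_entropy :: "('a::euclidean_space \<Rightarrow> real) \<Rightarrow> real" where
  "neg_entropy p = (\<integral>x. p x * ln (p x) \<partial>lborel)"

definition ELBO :: "sde \<Rightarrow> ('a::euclidean_space \<Rightarrow> real) \<Rightarrow> ('a \<Rightarrow> real \<Rightarrow> 'a) \<Rightarrow> real \<Rightarrow> real" where
  "ELBO s pdata sc T = neg_entropy pdata - G_gap s pdata sc T
      - KL (marg_dens s pdata T) (p_noise s T)"

definition ELBO_nu :: "sde \<Rightarrow> ('a::euclidean_space \<Rightarrow> real) \<Rightarrow> ('a \<Rightarrow> real) \<Rightarrow> ('a \<Rightarrow> real \<Rightarrow> 'a) \<Rightarrow> real \<Rightarrow> real" where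
  "ELBO_nu s pdata nu sc T = neg_entropy pdata - G_gap s pdata sc T
      - KL (marg_dens s pdata T) nu"

definition is_density :: "('a::euclidean_space \<Rightarrow> real) \<Rightarrow> bool" where
  "is_density p = ((\<forall>x. 0 \<le> p x) \<and> p \<in> borel_measurable lborel \<and>
                   integrable lborel p \<and> (\<integral>x. p x \<partial>lborel) = 1)"

end

theory Submission
  imports Defs
begin

lemma ELBO_eq_ELBO_nu_p_noise:
  "ELBO s pdata sc T = ELBO_nu s pdata (p_noise s T) sc T"
  unfolding ELBO_def ELBO_nu_def ..

lemma ELBO_nu_mono_KL:
  assumes "KL (marg_dens s pdata T) nu' \<le> KL (marg_dens s pdata T) nu"
  shows "ELBO_nu s pdata nu sc T \<le> ELBO_nu s pdata nu' sc T"
  using assms unfolding ELBO_nu_def by simp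

theorem proposition4:
  fixes s :: sde
    and pdata :: "'a::euclidean_space \<Rightarrow> real"
    and score :: "'q \<Rightarrow> ('a \<Rightarrow> real \<Rightarrow> 'a)"
    and theta_hat :: "real \<Rightarrow> 'q"
    and nu :: "'p \<Rightarrow> ('a \<Rightarrow> real)"
    and phi_star :: "real \<Rightarrow> 'p"
    and T_star :: real
  assumes "valid_sde s"
    and "is_density pdata"
    and "\<forall>\<phi>. is_density (nu \<phi>)"
    and "\<forall>T>0. \<exists>\<phi>. nu \<phi> = p_noise s T"
    and "\<forall>T>0. \<forall>\<theta>. I_loss s pdata (score (theta_hat T)) T \<le> I_loss s pdata (score \<theta>) T"
    and "\<forall>T>0. \<forall>\<phi>. KL (marg_dens s pdata T) (nu (phi_star T)) \<le> KL (marg_dens s pdata T) (nu \<phi>)"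
    and "T_star > 0"
    and "\<forall>T>0. ELBO s pdata (score (theta_hat T)) T \<le> ELBO s pdata (score (theta_hat T_star)) T_star"
  shows "\<exists>\<tau>\<in>{0..T_star}. ELBO_nu s pdata (nu (phi_star \<tau>)) (score (theta_hat \<tau>)) \<tau>
           \<ge> ELBO s pdata (score (theta_hat T_star)) T_star"
proof
  \<comment> \<open>The witness is \<tau> = T_star: the family contains p_noise, so its KL-optimal member can only do better.\<close>
  show "T_star \<in> {0..T_star}"
    using \<open>T_star > 0\<close> by simp
  obtain \<phi> where noise: "nu \<phi> = p_noise s T_star"
    using assms(4) \<open>T_star > 0\<close> by blast
  have "KL (marg_dens s pdata T_star) (nu (phi_star T_star))
          \<le> KL (marg_dens s pdata T_star) (p_noise s T_star)"
    using assms(6) \<open>T_star > 0\<close> noise by metis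
  then show "ELBO s pdata (score (theta_hat T_star)) T_star
               \<le> ELBO_nu s pdata (nu (phi_star T_star)) (score (theta_hat T_star)) T_star"
    unfolding ELBO_eq_ELBO_nu_p_noise by (rule ELBO_nu_mono_KL)
qed

end
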